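(* Let $c$ be the ellipse $x^2/a_c^2+y^2/b_c^2=1$, $a_c>b_c>0$, $e$ a confocal ellipse exterior to $c$ with semiaxes $(a_e,b_e)$, and $P_1\dots P_N$ an $N$-periodic billiard in $e$ with caustic $c$ with $N$ even, where $P_i=(a_e\cos t_i,b_e\sin t_i)$ and the contact point of side $P_iP_{i+1}$ with $c$ is $Q_i=(a_c\cos t_i',b_c\sin t_i')$. Put $\mathbf t_c(t)=(-a_c\sin t,\,b_c\cos t)$ and $k_h(t)=-\Vert\mathbf t_c(t)\Vert^2$. Then (indices mod $N$), for all $i$: \begin{itemize} \item if $N=4n$: $\Vert\mathbf t_c(t_i)\Vert\,\Vert\mathbf t_c(t_{i+n})\Vert=\sqrt{k_h(t_i)k_h(t_{i+n})}=a_cb_c$ and $\Vert\mathbf t_c(t_i')\Vert\,\Vert\mathbf t_c(t_{i+n}')\Vert=\sqrt{k_h(t_i')k_h(t_{i+n}')}=a_cb_c$; \item if $N=4n+2$: $\Vert\mathbf t_c(t_i)\Vert\,\Vert\mathbf t_c(t_{i+n}')\Vert=\sqrt{k_h(t_i)k_h(t_{i+n}')}=a_cb_c$ and $\Vert\mathbf t_c(t_i')\Vert\,\Vert\mathbf t_c(t_{i+n+1})\Vert=\sqrt{k_h(t_i')k_h(t_{i+n+1})}=a_cb_c$. \end{itemize}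
   Context: Confocal ellipses: $e$ has $a_e^2=a_c^2+k_e$, $b_e^2=b_c^2+k_e$ with $k_e>0$. A billiard in $e$ with caustic $c$ is a sequence of points $P_1,P_2,\dots$ on $e$ such that each line $P_iP_{i+1}$ is tangent to $c$ and $P_{i-1}P_i$, $P_iP_{i+1}$ are the two tangents from $P_i$ to $c$; it is traversed counterclockwise and is $N$-periodic if $P_{i+N}=P_i$. *)

theory Defs
  imports "HOL-Analysis.Analysis"
begin

definition tc :: "real \<Rightarrow> real \<Rightarrow> real \<Rightarrow> real \<times> real" where
  "tc ac bc t = (- ac * sin t, bc * cos t)"

definition kh :: "real \<Rightarrow> real \<Rightarrow> real \<Rightarrow> real" where
  "kh ac bc t = - ((norm (tc ac bc t))^2)"

text \<open>Vertex P_i = (a_e cos t_i, b_e sin t_i) on the confocal ellipse e.\<close>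
definition ptE :: "real \<Rightarrow> real \<Rightarrow> real \<Rightarrow> real \<Rightarrow> real \<times> real" where
  "ptE ac bc ke s = (sqrt (ac^2 + ke) * cos s, sqrt (bc^2 + ke) * sin s)"

definition on_tangent :: "real \<Rightarrow> real \<Rightarrow> real \<Rightarrow> real \<times> real \<Rightarrow> bool" where
  "on_tangent ac bc s p \<longleftrightarrow> fst p * cos s / ac + snd p * sin s / bc = 1"

text \<open>A billiard in e with caustic c, vertices given by parameters t i, contact point
  of side P_i P_(i+1) with c given by parameter t' i; traversed counterclockwise
  (c, hence the common centre, lies to the left of each directed side), and
  N-periodic with N its (minimal) period.\<close>
definition billiard :: "real \<Rightarrow> real \<Rightarrow> real \<Rightarrow> nat \<Rightarrow> (nat \<Rightarrow> real) \<Rightarrow> (nat \<Rightarrow> real) \<Rightarrow> bool" where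
  "billiard ac bc ke N t t' \<longleftrightarrow>
     (\<forall>i. ptE ac bc ke (t i) \<noteq> ptE ac bc ke (t (Suc i))
        \<and> on_tangent ac bc (t' i) (ptE ac bc ke (t i))
        \<and> on_tangent ac bc (t' i) (ptE ac bc ke (t (Suc i)))
        \<and> (cos (t' i), sin (t' i)) \<noteq> (cos (t' (Suc i)), sin (t' (Suc i)))
        \<and> fst (ptE ac bc ke (t i)) * snd (ptE ac bc ke (t (Suc i)))
          - snd (ptE ac bc ke (t i)) * fst (ptE ac bc ke (t (Suc i))) > 0)
   \<and> 0 < N
   \<and> (\<forall>i. ptE ac bc ke (t (i + N)) = ptE ac bc ke (t i))
   \<and> (\<forall>M. 0 < M \<and> M < N \<longrightarrow> (\<exists>i. ptE ac bc ke (t (i + M)) \<noteq> ptE ac bc ke (t i)))"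

end

theory Submission
  imports Defs
begin

text \<open>Scale the plane so that the caustic becomes the unit circle. The vertices and contact points of
  the billiard, taken alternately, then form one orbit of a single circle map: from a point, follow
  the counterclockwise tangent to its point of contact (tangency of a vertex with a contact point
  is a symmetric relation, so the same map leads from a contact point to the next vertex). Its lift
  \<open>tangent_step\<close> is strictly increasing and commutes with the translation by \<open>2 \<pi>\<close>. The lifted
  angle \<open>tc_angle\<close> of the tangent vector \<open>tc\<close> of the caustic is a square root of the translation by
  \<open>\<pi>\<close>, commutes with \<open>tangent_step\<close> because the ellipses are confocal, and satisfies
  \<open>\<parallel>tc (tc_angle t)\<parallel> \<parallel>tc t\<parallel> = a\<^sub>c b\<^sub>c\<close>. The orbit closes after \<open>2 N\<close> steps with some rotation
  number \<open>m\<close>, which is odd since otherwise \<open>N / 2\<close> would be a period. So \<open>N / 2\<close> steps of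
  \<open>tangent_step\<close> and \<open>m\<close> steps of \<open>tc_angle\<close> are commuting increasing fourth roots of the same
  translation; hence they agree, and along the orbit \<open>N / 2\<close> steps act as \<open>tc_angle\<close> up to a
  multiple of \<open>\<pi>\<close>.\<close>

section \<open>Iterates of commuting increasing maps\<close>

lemma strict_mono_funpow:
  fixes f :: "'a::order \<Rightarrow> 'a"
  assumes "strict_mono f"
  shows "strict_mono (f ^^ n)"
  by (induction n) (auto simp: strict_mono_def assms[unfolded strict_mono_def])

lemma commuting_funpow:
  assumes "\<And>x. f (g x) = g (f x)"
  shows "(f ^^ n) ((g ^^ m) x) = (g ^^ m) ((f ^^ n) x)"
proof -
  have *: "(h ^^ k) (l y) = l ((h ^^ k) y)" if "\<And>x. h (l x) = l (h x)" for h l :: "'a \<Rightarrow> 'a" and k y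
    using that by (induction k arbitrary: y) simp_all
  show ?thesis
    using *[of g "f ^^ n" m x] *[of f g n] assms by metis
qed

lemma commuting_funpow_less:
  fixes f g :: "'a::order \<Rightarrow> 'a"
  assumes "strict_mono f" "strict_mono g" "\<And>x. f (g x) = g (f x)" "f x < g x"
  shows "(f ^^ Suc n) x < (g ^^ Suc n) x"
proof (induction n)
  case 0
  then show ?case using assms(4) by simp
next
  case (Suc n)
  have "(f ^^ Suc (Suc n)) x = f ((f ^^ Suc n) x)" by simp
  also have "\<dots> < f ((g ^^ Suc n) x)" by (rule strict_monoD[OF assms(1) Suc])
  also have "\<dots> = (g ^^ Suc n) (f x)" using commuting_funpow[of f g 1 "Suc n"] assms(3) by simp
  also have "\<dots> < (g ^^ Suc n) (g x)" by (rule strict_monoD[OF strict_mono_funpow[OF assms(2)] assms(4)])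
  also have "\<dots> = (g ^^ Suc (Suc n)) x" by (simp add: funpow_swap1)
  finally show ?case .
qed

lemma commuting_strict_mono_funpow_eq:
  fixes f g :: "'a::linorder \<Rightarrow> 'a"
  assumes "strict_mono f" "strict_mono g" "\<And>x. f (g x) = g (f x)"
    and "0 < k" "(f ^^ k) x = (g ^^ k) x"
  shows "f x = g x"
proof (rule ccontr)
  obtain n where k: "k = Suc n" using \<open>0 < k\<close> gr0_implies_Suc by blast
  assume "f x \<noteq> g x"
  then consider "f x < g x" | "g x < f x" by (meson linorder_neqE)
  then show False
  proof cases
    case 1
    then show False using commuting_funpow_less[OF assms(1-3) 1, of n] assms(5) k by simp
  next
    case 2
    then show False using commuting_funpow_less[OF assms(2,1) _ 2, of n] assms(3,5) k by simp
  qed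
qed

lemma funpow_shift_commute:
  assumes "\<And>x. f (x + c) = f x + c"
  shows "(f ^^ n) (x + of_nat m * c) = (f ^^ n) x + of_nat m * c"
proof -
  have "f (x + of_nat m * c) = f x + of_nat m * c" for x
    by (induction m arbitrary: x) (simp_all add: algebra_simps assms flip: add.assoc)
  then show ?thesis by (induction n) simp_all
qed

text \<open>An even rotation number \<open>m = 2 m'\<close> would make \<open>A ^^ (2 * L)\<close> and the translation by
  \<open>2 m' \<pi>\<close> commuting square roots of the same map at \<open>x0\<close>. For odd \<open>m\<close>, \<open>A ^^ L\<close> and \<open>P ^^ m\<close>
  are commuting fourth roots of the translation by \<open>2 m \<pi>\<close>.\<close>
lemma funpow_eq_quarter_turn:
  fixes A P :: "real \<Rightarrow> real"
  assumes A: "strict_mono A" and P: "strict_mono P"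
    and A_2pi: "\<And>x. A (x + 2 * pi) = A x + 2 * pi"
    and PA: "\<And>x. P (A x) = A (P x)"
    and PP: "\<And>x. P (P x) = x + pi"
    and closed: "(A ^^ (4 * L)) x0 = x0 + real m * (2 * pi)"
    and not_half: "\<And>m'. (A ^^ (2 * L)) x0 \<noteq> x0 + real m' * (2 * pi)"
  shows "\<exists>j::nat. \<forall>k. (A ^^ (k + L)) x0 = P ((A ^^ k) x0) + real j * pi"
proof -
  have P_even: "(P ^^ (2 * j)) y = y + real j * pi" for j y
    by (induction j arbitrary: y) (simp_all add: funpow_swap1 PP algebra_simps)
  have "odd m"
  proof
    assume "even m"
    then obtain m' where m': "m = 2 * m'" by blast
    define T where "T y = y + real m' * (2 * pi)" for y
    have "strict_mono T" unfolding T_def by (rule strict_monoI) simp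
    moreover have "(A ^^ (2 * L)) (T y) = T ((A ^^ (2 * L)) y)" for y
      unfolding T_def by (rule funpow_shift_commute[of A, OF A_2pi])
    moreover have "((A ^^ (2 * L)) ^^ 2) x0 = (T ^^ 2) x0"
    proof -
      have "((A ^^ (2 * L)) ^^ 2) x0 = (A ^^ (4 * L)) x0"
        by (simp add: funpow_mult mult.commute)
      then show ?thesis using closed m' by (simp add: T_def numeral_2_eq_2 algebra_simps)
    qed
    ultimately have "(A ^^ (2 * L)) x0 = T x0"
      using commuting_strict_mono_funpow_eq[OF strict_mono_funpow[OF A]] by (metis zero_less_numeral)
    then show False using not_half[of m'] by (simp add: T_def)
  qed
  then obtain j where m: "m = 2 * j + 1" using oddE by blast
  have "((A ^^ L) ^^ 4) x0 = ((P ^^ m) ^^ 4) x0"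
  proof -
    have "((A ^^ L) ^^ 4) x0 = x0 + real m * (2 * pi)"
      using closed by (simp add: funpow_mult mult.commute)
    also have "\<dots> = (P ^^ (2 * (2 * m))) x0" by (simp only: P_even)
    also have "\<dots> = ((P ^^ m) ^^ 4) x0" by (simp add: funpow_mult mult.commute)
    finally show ?thesis .
  qed
  then have AL: "(A ^^ L) x0 = (P ^^ m) x0"
    using commuting_strict_mono_funpow_eq[OF strict_mono_funpow[OF A] strict_mono_funpow[OF P]]
      commuting_funpow[of A P L m] PA by (metis zero_less_numeral)
  have "(A ^^ (k + L)) x0 = P ((A ^^ k) x0) + real j * pi" for k
  proof -
    have "(A ^^ (k + L)) x0 = (A ^^ k) ((P ^^ m) x0)" by (simp add: funpow_add AL)
    also have "\<dots> = (P ^^ m) ((A ^^ k) x0)" using commuting_funpow[of A P k m] PA by metis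
    also have "\<dots> = P ((A ^^ k) x0) + real j * pi"
      by (simp only: m Suc_eq_plus1[symmetric] funpow_Suc_right o_apply P_even)
    finally show ?thesis .
  qed
  then show ?thesis by blast
qed

section \<open>Lifted angles\<close>

definition same_angle :: "real \<Rightarrow> real \<Rightarrow> bool" where
  "same_angle x y \<longleftrightarrow> cos x = cos y \<and> sin x = sin y"

lemma same_angle_refl [simp]: "same_angle x x"
  by (simp add: same_angle_def)

lemma same_angle_sym: "same_angle x y \<Longrightarrow> same_angle y x"
  by (simp add: same_angle_def)

lemma same_angle_trans: "same_angle x y \<Longrightarrow> same_angle y z \<Longrightarrow> same_angle x z"
  by (simp add: same_angle_def)

lemma same_angle_iff: "same_angle x y \<longleftrightarrow> (\<exists>n::int. x = y + 2 * pi * n)"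
  unfolding same_angle_def using sin_cos_eq_iff by blast

lemma same_angle_eq:
  assumes "same_angle x y" "\<bar>x - y\<bar> < 2 * pi"
  shows "x = y"
proof -
  obtain n :: int where n: "x - y = 2 * pi * n" using assms(1) by (auto simp: same_angle_iff)
  then have "\<bar>real_of_int n\<bar> < 1" using assms(2) by (simp add: abs_mult)
  then have "n = 0" by linarith
  then show ?thesis using n by simp
qed

lemma cos_mult_add_sin_mult_sq:
  fixes t p q :: real
  shows "(cos t * p + sin t * q)\<^sup>2 + (cos t * q - sin t * p)\<^sup>2 = p\<^sup>2 + q\<^sup>2"
proof -
  have "(c * p + s * q)\<^sup>2 + (c * q - s * p)\<^sup>2 = (c\<^sup>2 + s\<^sup>2) * (p\<^sup>2 + q\<^sup>2)" for c s :: real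
    by algebra
  then show ?thesis by simp
qed

lemma abs_cos_mult_add_sin_mult_le:
  fixes t p q :: real
  assumes "p\<^sup>2 + q\<^sup>2 = 1"
  shows "\<bar>cos t * p + sin t * q\<bar> \<le> 1"
proof -
  have "(cos t * p + sin t * q)\<^sup>2 \<le> 1"
    using cos_mult_add_sin_mult_sq[of t p q] assms zero_le_power2[of "cos t * q - sin t * p"] by linarith
  then show ?thesis using abs_le_square_iff[of "cos t * p + sin t * q" 1] by simp
qed

text \<open>\<open>lift_angle t p q\<close> is the angle of the unit vector \<open>(p, q)\<close>, lifted to \<open>(t, t + \<pi>)\<close>
  when \<open>(p, q)\<close> lies to the left of \<open>(cos t, sin t)\<close>.\<close>
definition lift_angle :: "real \<Rightarrow> real \<Rightarrow> real \<Rightarrow> real" where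
  "lift_angle t p q = t + arccos (cos t * p + sin t * q)"

lemma
  assumes unit: "p\<^sup>2 + q\<^sup>2 = 1" and left: "cos t * q - sin t * p > 0"
  shows cos_lift_angle: "cos (lift_angle t p q) = p"
    and sin_lift_angle: "sin (lift_angle t p q) = q"
    and lift_angle_gt: "t < lift_angle t p q"
    and lift_angle_less: "lift_angle t p q < t + pi"
proof -
  define k where "k = cos t * p + sin t * q"
  define w where "w = cos t * q - sin t * p"
  have k: "-1 \<le> k" "k \<le> 1" using abs_cos_mult_add_sin_mult_le[OF unit, of t] by (auto simp: k_def)
  have "1 - k\<^sup>2 = w\<^sup>2" using cos_mult_add_sin_mult_sq[of t p q] unit by (simp add: k_def w_def)
  then have sin_k: "sin (arccos k) = w" using left k by (simp add: sin_arccos w_def)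
  have "cos (t + arccos k) = cos t * k - sin t * w" using k sin_k by (simp add: cos_add)
  also have "\<dots> = p"
    by (simp add: k_def w_def algebra_simps) (metis distrib_left mult.right_neutral sin_cos_squared_add3)
  finally show "cos (lift_angle t p q) = p" by (simp add: lift_angle_def k_def)
  have "sin (t + arccos k) = sin t * k + cos t * w" using k sin_k by (simp add: sin_add)
  also have "\<dots> = q"
    by (simp add: k_def w_def algebra_simps) (metis distrib_left mult.right_neutral sin_cos_squared_add3)
  finally show "sin (lift_angle t p q) = q" by (simp add: lift_angle_def k_def)
  have "arccos k \<noteq> 0" "arccos k \<noteq> pi" using sin_k left w_def by auto
  then show "t < lift_angle t p q" "lift_angle t p q < t + pi"
    using arccos_bounded[OF k] by (auto simp: lift_angle_def k_def)
qed

text \<open>A continuous lift advancing every angle by less than \<open>\<pi>\<close> of an injective circle map is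
  injective, hence strictly increasing.\<close>
lemma strict_mono_lift_angle:
  fixes p q :: "real \<Rightarrow> real"
  assumes cont: "continuous_on UNIV p" "continuous_on UNIV q"
    and unit: "\<And>t. (p t)\<^sup>2 + (q t)\<^sup>2 = 1"
    and left: "\<And>t. cos t * q t - sin t * p t > 0"
    and inj: "\<And>x y. p x = p y \<Longrightarrow> q x = q y \<Longrightarrow> same_angle x y"
  shows "strict_mono (\<lambda>t. lift_angle t (p t) (q t))"
proof
  define F where "F t = lift_angle t (p t) (q t)" for t
  have bounds: "t < F t" "F t < t + pi" for t
    unfolding F_def using lift_angle_gt lift_angle_less unit left by auto
  have "-1 \<le> cos t * p t + sin t * q t \<and> cos t * p t + sin t * q t \<le> 1" for t
    using abs_cos_mult_add_sin_mult_le[OF unit[of t], of t] by (auto simp: abs_le_iff)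
  then have "continuous_on UNIV F"
    unfolding F_def lift_angle_def using cont by (auto intro!: continuous_intros)
  moreover have "inj_on F S" for S
  proof
    fix x y assume "F x = F y"
    then have "same_angle x y"
      using inj cos_lift_angle[OF unit left] sin_lift_angle[OF unit left] unfolding F_def by metis
    moreover have "\<bar>x - y\<bar> < 2 * pi" using bounds[of x] bounds[of y] \<open>F x = F y\<close> by linarith
    ultimately show "x = y" by (rule same_angle_eq)
  qed
  ultimately have mono3: "F a < F x \<and> F x < F b \<or> F b < F x \<and> F x < F a" if "a < x" "x < b" for a x b
    using continuous_inj_imp_mono[OF that] continuous_on_subset by blast
  fix x y :: real assume "x < y"
  then show "F x < F y"
    using mono3[of x y "y + pi"] bounds[of x] bounds[of "y + pi"] by (simp add: F_def) linarith
qed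

section \<open>Tangents to the unit circle\<close>

lemma abs_cos_mult_cos_add_abs_sin_mult_sin_le:
  fixes x y :: real
  shows "\<bar>cos x * cos y\<bar> + \<bar>sin x * sin y\<bar> \<le> 1"
proof (cases "0 \<le> (cos x * cos y) * (sin x * sin y)")
  case True
  have "\<bar>a\<bar> + \<bar>b\<bar> = \<bar>a + b\<bar>" if "0 \<le> a * b" for a b :: real
    using that by (auto simp: zero_le_mult_iff abs_if)
  from this[OF True] show ?thesis by (simp add: flip: cos_diff)
next
  case False
  have "\<bar>a\<bar> + \<bar>b\<bar> = \<bar>a - b\<bar>" if "\<not> 0 \<le> a * b" for a b :: real
    using that by (auto simp: zero_le_mult_iff abs_if)
  from this[OF False] show ?thesis by (simp add: flip: cos_add)
qed

text \<open>After scaling the plane so that the caustic becomes the unit circle, the vertex with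
  parameter \<open>x\<close> is the point \<open>(\<alpha> cos x, \<beta> sin x)\<close>: it lies on the tangent to the circle at
  \<open>(cos y, sin y)\<close> iff \<open>tang \<alpha> \<beta> x y = 1\<close>, and \<open>turn \<alpha> \<beta> x y\<close> is its cross product with
  \<open>(cos y, sin y)\<close>.\<close>
definition tang :: "real \<Rightarrow> real \<Rightarrow> real \<Rightarrow> real \<Rightarrow> real" where
  "tang \<alpha> \<beta> x y = \<alpha> * cos x * cos y + \<beta> * sin x * sin y"

definition turn :: "real \<Rightarrow> real \<Rightarrow> real \<Rightarrow> real \<Rightarrow> real" where
  "turn \<alpha> \<beta> x y = \<alpha> * cos x * sin y - \<beta> * sin x * cos y"

lemma tang_commute: "tang \<alpha> \<beta> x y = tang \<alpha> \<beta> y x"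
  unfolding tang_def by (simp add: algebra_simps)

lemma tang_same_angle: "same_angle x x' \<Longrightarrow> same_angle y y' \<Longrightarrow> tang \<alpha> \<beta> x y = tang \<alpha> \<beta> x' y'"
  unfolding tang_def same_angle_def by simp

lemma turn_same_angle: "same_angle x x' \<Longrightarrow> same_angle y y' \<Longrightarrow> turn \<alpha> \<beta> x y = turn \<alpha> \<beta> x' y'"
  unfolding turn_def same_angle_def by simp

lemma tang_sq_add_turn_sq:
  "(tang \<alpha> \<beta> x y)\<^sup>2 + (turn \<alpha> \<beta> x y)\<^sup>2 = (\<alpha> * cos x)\<^sup>2 + (\<beta> * sin x)\<^sup>2"
proof -
  have "(u * c + v * s)\<^sup>2 + (u * s - v * c)\<^sup>2 = (u\<^sup>2 + v\<^sup>2) * (c\<^sup>2 + s\<^sup>2)" for u v c s :: real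
    by algebra
  from this[of "\<alpha> * cos x" "cos y" "\<beta> * sin x" "sin y"] show ?thesis
    unfolding tang_def turn_def by (simp add: algebra_simps)
qed

lemma turn_eq_imp_same_angle:
  assumes "tang \<alpha> \<beta> x y = 1" "tang \<alpha> \<beta> x z = 1" "turn \<alpha> \<beta> x y = turn \<alpha> \<beta> x z"
  shows "same_angle y z"
proof -
  define R where "R = (\<alpha> * cos x)\<^sup>2 + (\<beta> * sin x)\<^sup>2"
  have "R = 1 + (turn \<alpha> \<beta> x y)\<^sup>2" using tang_sq_add_turn_sq[of \<alpha> \<beta> x y] assms(1) by (simp add: R_def)
  then have "R \<noteq> 0" using zero_le_power2[of "turn \<alpha> \<beta> x y"] by linarith
  moreover have "R * cos w = \<alpha> * cos x * tang \<alpha> \<beta> x w - \<beta> * sin x * turn \<alpha> \<beta> x w"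
    and "R * sin w = \<beta> * sin x * tang \<alpha> \<beta> x w + \<alpha> * cos x * turn \<alpha> \<beta> x w" for w
    unfolding R_def tang_def turn_def by (simp_all add: power2_eq_square algebra_simps)
  ultimately show ?thesis using assms unfolding same_angle_def by (metis mult_left_cancel)
qed

lemma turn_eq_minus:
  assumes "tang \<alpha> \<beta> x y = 1" "tang \<alpha> \<beta> x z = 1" "\<not> same_angle y z"
  shows "turn \<alpha> \<beta> x z = - turn \<alpha> \<beta> x y"
proof -
  have "(turn \<alpha> \<beta> x z)\<^sup>2 = (turn \<alpha> \<beta> x y)\<^sup>2"
    using tang_sq_add_turn_sq[of \<alpha> \<beta> x y] tang_sq_add_turn_sq[of \<alpha> \<beta> x z] assms(1,2) by simp
  then show ?thesis using turn_eq_imp_same_angle[OF assms(1,2)] assms(3) power2_eq_iff by metis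
qed

text \<open>The product equals \<open>\<beta> cos x cos y + \<alpha> sin x sin y - \<alpha> \<beta>\<close>, and the first two terms
  add up to at most \<open>max \<alpha> \<beta> < \<alpha> \<beta>\<close>.\<close>
lemma turn_mult_turn_commute_neg:
  assumes "\<alpha> > 1" "\<beta> > 1" "tang \<alpha> \<beta> x y = 1"
  shows "turn \<alpha> \<beta> x y * turn \<alpha> \<beta> y x < 0"
proof -
  define C where "C = cos x * cos y"
  define S where "S = sin x * sin y"
  have "(\<alpha> * c * s' - \<beta> * s * c') * (\<alpha> * c' * s - \<beta> * s' * c)
      = (\<alpha> * c * c' + \<beta> * s * s') * (\<beta> * (c * c') + \<alpha> * (s * s'))
        - \<alpha> * \<beta> * ((c\<^sup>2 + s\<^sup>2) * (c'\<^sup>2 + s'\<^sup>2))" for c s c' s' :: real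
    by algebra
  from this[of "cos x" "sin y" "sin x" "cos y"]
  have "turn \<alpha> \<beta> x y * turn \<alpha> \<beta> y x = tang \<alpha> \<beta> x y * (\<beta> * C + \<alpha> * S) - \<alpha> * \<beta>"
    unfolding turn_def tang_def C_def S_def by simp
  then have prod: "turn \<alpha> \<beta> x y * turn \<alpha> \<beta> y x = \<beta> * C + \<alpha> * S - \<alpha> * \<beta>"
    using assms(3) by simp
  have CS: "\<bar>C\<bar> + \<bar>S\<bar> \<le> 1" unfolding C_def S_def by (rule abs_cos_mult_cos_add_abs_sin_mult_sin_le)
  have "\<beta> * C \<le> \<beta> * \<bar>C\<bar>" "\<beta> * \<bar>C\<bar> \<le> max \<alpha> \<beta> * \<bar>C\<bar>"
    and "\<alpha> * S \<le> \<alpha> * \<bar>S\<bar>" "\<alpha> * \<bar>S\<bar> \<le> max \<alpha> \<beta> * \<bar>S\<bar>"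
    using assms(1,2) by (simp_all add: mult_left_mono mult_right_mono)
  then have "\<beta> * C + \<alpha> * S \<le> max \<alpha> \<beta> * (\<bar>C\<bar> + \<bar>S\<bar>)"
    by (simp add: distrib_left)
  also have "\<dots> \<le> max \<alpha> \<beta>" using CS assms(1,2) by (simp add: mult_left_le)
  also have "\<dots> < \<alpha> * \<beta>" using assms(1,2) by (simp add: less_1_mult)
  finally show ?thesis using prod by simp
qed

text \<open>Two points on the tangent at \<open>s\<close> differ by a multiple of the tangent direction.\<close>
lemma turn_diff_eq_cross:
  assumes "tang \<alpha> \<beta> x s = 1" "tang \<alpha> \<beta> u s = 1"
  shows "turn \<alpha> \<beta> x s - turn \<alpha> \<beta> u s = \<alpha> * \<beta> * (cos x * sin u - sin x * cos u)"
proof -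
  define p1 where "p1 = \<alpha> * cos x - cos s"
  define q1 where "q1 = \<beta> * sin x - sin s"
  define p2 where "p2 = \<alpha> * cos u - cos s"
  define q2 where "q2 = \<beta> * sin u - sin s"
  have "cos s * p1 + sin s * q1 = 0" "cos s * p2 + sin s * q2 = 0"
    using assms sin_cos_squared_add[of s]
    unfolding p1_def q1_def p2_def q2_def tang_def by (simp_all add: power2_eq_square algebra_simps)
  moreover have "c * p1 + s' * q1 = 0 \<Longrightarrow> c * p2 + s' * q2 = 0 \<Longrightarrow> (p1 * q2 - q1 * p2) * (c\<^sup>2 + s'\<^sup>2) = 0"
    for c s' :: real by algebra
  ultimately have "p1 * q2 - q1 * p2 = 0" by fastforce
  moreover have "\<alpha> * \<beta> * (cos x * sin u - sin x * cos u)
      = turn \<alpha> \<beta> x s - turn \<alpha> \<beta> u s + (p1 * q2 - q1 * p2)"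
    unfolding turn_def p1_def q1_def p2_def q2_def by (simp add: algebra_simps)
  ultimately show ?thesis by simp
qed

lemma same_angle_if_turn_pos:
  assumes "\<alpha> > 1" "\<beta> > 1" "tang \<alpha> \<beta> x s = 1" "tang \<alpha> \<beta> y s = 1"
    and "turn \<alpha> \<beta> x s > 0" "turn \<alpha> \<beta> y s > 0"
  shows "same_angle x y"
proof (rule ccontr)
  assume "\<not> same_angle x y"
  then have "turn \<alpha> \<beta> s y = - turn \<alpha> \<beta> s x"
    using turn_eq_minus assms(3,4) tang_commute by metis
  moreover have "turn \<alpha> \<beta> x s * turn \<alpha> \<beta> s x < 0" "turn \<alpha> \<beta> y s * turn \<alpha> \<beta> s y < 0"
    using turn_mult_turn_commute_neg[OF assms(1,2)] assms(3,4) by blast+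
  ultimately show False using assms(5,6) by (auto simp: mult_less_0_iff zero_less_mult_iff)
qed

lemma turn_pos_if_cross_pos:
  assumes "\<alpha> > 1" "\<beta> > 1" "tang \<alpha> \<beta> x s = 1" "tang \<alpha> \<beta> s u = 1"
    and "cos x * sin u - sin x * cos u > 0"
  shows "turn \<alpha> \<beta> x s > 0" "turn \<alpha> \<beta> s u > 0"
proof -
  have "\<not> same_angle x u" using assms(5) by (auto simp: same_angle_def)
  then have opp: "turn \<alpha> \<beta> s u = - turn \<alpha> \<beta> s x"
    using turn_eq_minus assms(3,4) tang_commute by metis
  have "tang \<alpha> \<beta> u s = 1" using assms(4) tang_commute by metis
  then have "turn \<alpha> \<beta> x s - turn \<alpha> \<beta> u s = \<alpha> * \<beta> * (cos x * sin u - sin x * cos u)"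
    by (rule turn_diff_eq_cross[OF assms(3)])
  moreover have "\<alpha> * \<beta> * (cos x * sin u - sin x * cos u) > 0" using assms(1,2,5) by simp
  ultimately have gt: "turn \<alpha> \<beta> x s > turn \<alpha> \<beta> u s" by simp
  have "turn \<alpha> \<beta> x s * turn \<alpha> \<beta> s x < 0" "turn \<alpha> \<beta> u s * turn \<alpha> \<beta> s u < 0"
    using turn_mult_turn_commute_neg[OF assms(1,2)] assms(3,4) tang_commute by metis+
  then show "turn \<alpha> \<beta> x s > 0" "turn \<alpha> \<beta> s u > 0"
    using opp gt by (auto simp: mult_less_0_iff zero_less_mult_iff)
qed

section \<open>The tangent step\<close>

text \<open>The tangent from a point \<open>u\<close> outside the unit circle that leaves the circle on its left
  touches it at \<open>v = (u + sqrt (\<parallel>u\<parallel>\<^sup>2 - 1) u\<^sup>\<bottom>) / \<parallel>u\<parallel>\<^sup>2\<close>, where \<open>u\<^sup>\<bottom>\<close> is \<open>u\<close> rotated by \<open>\<pi>/2\<close>.\<close>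
definition touch_x :: "real \<Rightarrow> real \<Rightarrow> real" where
  "touch_x u1 u2 = (u1 - u2 * sqrt (u1\<^sup>2 + u2\<^sup>2 - 1)) / (u1\<^sup>2 + u2\<^sup>2)"

definition touch_y :: "real \<Rightarrow> real \<Rightarrow> real" where
  "touch_y u1 u2 = (u2 + u1 * sqrt (u1\<^sup>2 + u2\<^sup>2 - 1)) / (u1\<^sup>2 + u2\<^sup>2)"

lemma
  fixes u1 u2 :: real
  assumes "u1\<^sup>2 + u2\<^sup>2 > 1"
  shows touch_unit: "(touch_x u1 u2)\<^sup>2 + (touch_y u1 u2)\<^sup>2 = 1"
    and touch_dot: "u1 * touch_x u1 u2 + u2 * touch_y u1 u2 = 1"
    and touch_cross: "u1 * touch_y u1 u2 - u2 * touch_x u1 u2 = sqrt (u1\<^sup>2 + u2\<^sup>2 - 1)"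
proof -
  define R where "R = u1\<^sup>2 + u2\<^sup>2"
  define g where "g = sqrt (R - 1)"
  have "R > 1" using assms by (simp add: R_def)
  then have R: "R \<noteq> 0" and g: "g\<^sup>2 = R - 1" by (simp_all add: g_def)
  have x: "touch_x u1 u2 = (u1 - u2 * g) / R" and y: "touch_y u1 u2 = (u2 + u1 * g) / R"
    by (simp_all add: touch_x_def touch_y_def R_def g_def)
  have "(u1 - u2 * g)\<^sup>2 + (u2 + u1 * g)\<^sup>2 = R * (1 + g\<^sup>2)"
    unfolding R_def by algebra
  then show "(touch_x u1 u2)\<^sup>2 + (touch_y u1 u2)\<^sup>2 = 1"
    unfolding x y g using R by (simp add: power_divide add_divide_distrib[symmetric] power2_eq_square)
  have "u1 * (u1 - u2 * g) + u2 * (u2 + u1 * g) = R" unfolding R_def by algebra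
  then show "u1 * touch_x u1 u2 + u2 * touch_y u1 u2 = 1"
    unfolding x y using R by (simp add: add_divide_distrib[symmetric])
  have "u1 * (u2 + u1 * g) - u2 * (u1 - u2 * g) = R * g" unfolding R_def by algebra
  then show "u1 * touch_y u1 u2 - u2 * touch_x u1 u2 = sqrt (u1\<^sup>2 + u2\<^sup>2 - 1)"
    unfolding x y using R by (simp add: diff_divide_distrib[symmetric] g_def R_def)
qed

definition vertex_sq :: "real \<Rightarrow> real \<Rightarrow> real \<Rightarrow> real" where
  "vertex_sq \<alpha> \<beta> t = (\<alpha> * cos t)\<^sup>2 + (\<beta> * sin t)\<^sup>2"

definition tangent_step :: "real \<Rightarrow> real \<Rightarrow> real \<Rightarrow> real" where
  "tangent_step \<alpha> \<beta> t = lift_angle t (touch_x (\<alpha> * cos t) (\<beta> * sin t)) (touch_y (\<alpha> * cos t) (\<beta> * sin t))"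

context
  fixes \<alpha> \<beta> :: real
  assumes \<alpha>: "\<alpha> > 1" and \<beta>: "\<beta> > 1"
begin

lemma vertex_sq_gt_1: "vertex_sq \<alpha> \<beta> t > 1"
proof (cases "cos t = 0")
  case True
  then have "(sin t)\<^sup>2 = 1" using sin_cos_squared_add[of t] by simp
  then show ?thesis using True \<beta> by (simp add: vertex_sq_def power_mult_distrib)
next
  case False
  have "(\<alpha> * cos t)\<^sup>2 > (cos t)\<^sup>2"
    using False \<alpha> by (simp add: power_mult_distrib)
  moreover have "(\<beta> * sin t)\<^sup>2 \<ge> (sin t)\<^sup>2"
    using mult_right_mono[of 1 "\<beta>\<^sup>2" "(sin t)\<^sup>2"] \<beta> by (simp add: power_mult_distrib)
  ultimately show ?thesis using sin_cos_squared_add[of t] unfolding vertex_sq_def by linarith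
qed

lemma touch_vertex:
  shows "(touch_x (\<alpha> * cos t) (\<beta> * sin t))\<^sup>2 + (touch_y (\<alpha> * cos t) (\<beta> * sin t))\<^sup>2 = 1"
    and "\<alpha> * cos t * touch_x (\<alpha> * cos t) (\<beta> * sin t) + \<beta> * sin t * touch_y (\<alpha> * cos t) (\<beta> * sin t) = 1"
    and "\<alpha> * cos t * touch_y (\<alpha> * cos t) (\<beta> * sin t) - \<beta> * sin t * touch_x (\<alpha> * cos t) (\<beta> * sin t)
           = sqrt (vertex_sq \<alpha> \<beta> t - 1)"
  using touch_unit touch_dot touch_cross vertex_sq_gt_1[of t] unfolding vertex_sq_def by auto

text \<open>The touching point lies within \<open>\<pi>\<close> counterclockwise of \<open>t\<close>: its cross product with
  \<open>(cos t, sin t)\<close> is \<open>(C + g D) / R\<close> with \<open>D > 1\<close>, and \<open>g D > \<bar>C\<bar>\<close> because \<open>C\<^sup>2 + D\<^sup>2 = R\<close>.\<close>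
lemma touch_vertex_left:
  "cos t * touch_y (\<alpha> * cos t) (\<beta> * sin t) - sin t * touch_x (\<alpha> * cos t) (\<beta> * sin t) > 0"
proof -
  define c s where "c = cos t" and "s = sin t"
  define R where "R = vertex_sq \<alpha> \<beta> t"
  define g where "g = sqrt (R - 1)"
  define C D where "C = (\<beta> - \<alpha>) * c * s" and "D = \<alpha> * c\<^sup>2 + \<beta> * s\<^sup>2"
  have cs: "c\<^sup>2 + s\<^sup>2 = 1" by (simp add: c_def s_def)
  have R1: "R > 1" using vertex_sq_gt_1 by (simp add: R_def)
  have "D - 1 = (\<alpha> - 1) * c\<^sup>2 + (\<beta> - 1) * s\<^sup>2" using cs by (simp add: D_def algebra_simps)
  moreover have "(\<alpha> - 1) * c\<^sup>2 + (\<beta> - 1) * s\<^sup>2 > 0"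
  proof (cases "c = 0")
    case True
    then show ?thesis using cs \<beta> by simp
  next
    case False
    then show ?thesis using \<alpha> \<beta> by (simp add: add_pos_nonneg)
  qed
  ultimately have D1: "D > 1" by simp
  have "C\<^sup>2 + D\<^sup>2 = ((\<alpha> * c)\<^sup>2 + (\<beta> * s)\<^sup>2) * (c\<^sup>2 + s\<^sup>2)" unfolding C_def D_def by algebra
  then have CD: "C\<^sup>2 + D\<^sup>2 = R" using cs by (simp add: R_def vertex_sq_def c_def s_def)
  have "(g * D)\<^sup>2 = C\<^sup>2 + R * (D\<^sup>2 - 1)"
    using R1 CD by (simp add: g_def power_mult_distrib algebra_simps)
  moreover have "D\<^sup>2 > 1" using D1 by (simp add: one_less_power)
  ultimately have "\<bar>C\<bar>\<^sup>2 < (g * D)\<^sup>2" using R1 by simp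
  moreover have "g * D \<ge> 0" using R1 D1 by (simp add: g_def)
  ultimately have gD: "C + g * D > 0" using power2_less_imp_less by fastforce
  have "touch_x (\<alpha> * c) (\<beta> * s) = (\<alpha> * c - \<beta> * s * g) / R"
    "touch_y (\<alpha> * c) (\<beta> * s) = (\<beta> * s + \<alpha> * c * g) / R"
    by (simp_all add: touch_x_def touch_y_def g_def R_def vertex_sq_def c_def s_def)
  moreover have "c * ((\<beta> * s + \<alpha> * c * g) / R) - s * ((\<alpha> * c - \<beta> * s * g) / R) = (C + g * D) / R"
    unfolding C_def D_def by (simp add: diff_divide_distrib[symmetric] power2_eq_square algebra_simps)
  ultimately show ?thesis using gD R1 by (simp add: c_def s_def)
qed

lemma
  shows cos_tangent_step: "cos (tangent_step \<alpha> \<beta> t) = touch_x (\<alpha> * cos t) (\<beta> * sin t)"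
    and sin_tangent_step: "sin (tangent_step \<alpha> \<beta> t) = touch_y (\<alpha> * cos t) (\<beta> * sin t)"
    and tangent_step_gt: "t < tangent_step \<alpha> \<beta> t"
    and tangent_step_less: "tangent_step \<alpha> \<beta> t < t + pi"
  unfolding tangent_step_def
  using cos_lift_angle sin_lift_angle lift_angle_gt lift_angle_less touch_vertex(1) touch_vertex_left
  by blast+

lemma tang_tangent_step: "tang \<alpha> \<beta> t (tangent_step \<alpha> \<beta> t) = 1"
  using touch_vertex(2) by (simp add: tang_def cos_tangent_step sin_tangent_step)

lemma turn_tangent_step: "turn \<alpha> \<beta> t (tangent_step \<alpha> \<beta> t) = sqrt (vertex_sq \<alpha> \<beta> t - 1)"
  using touch_vertex(3) by (simp add: turn_def cos_tangent_step sin_tangent_step)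

lemma turn_tangent_step_pos: "turn \<alpha> \<beta> t (tangent_step \<alpha> \<beta> t) > 0"
  using vertex_sq_gt_1 by (simp add: turn_tangent_step)

lemma tangent_step_unique:
  assumes "tang \<alpha> \<beta> t s = 1" "turn \<alpha> \<beta> t s > 0"
  shows "same_angle s (tangent_step \<alpha> \<beta> t)"
proof (rule turn_eq_imp_same_angle[OF assms(1) tang_tangent_step])
  have "(turn \<alpha> \<beta> t s)\<^sup>2 = (turn \<alpha> \<beta> t (tangent_step \<alpha> \<beta> t))\<^sup>2"
    using tang_sq_add_turn_sq[of \<alpha> \<beta> t s] tang_sq_add_turn_sq[of \<alpha> \<beta> t "tangent_step \<alpha> \<beta> t"]
      assms(1) tang_tangent_step by simp
  then show "turn \<alpha> \<beta> t s = turn \<alpha> \<beta> t (tangent_step \<alpha> \<beta> t)"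
    using assms(2) turn_tangent_step_pos[of t] by (metis power2_eq_iff_nonneg less_imp_le)
qed

lemma tangent_step_same_angle:
  assumes "same_angle x y"
  shows "same_angle (tangent_step \<alpha> \<beta> x) (tangent_step \<alpha> \<beta> y)"
proof (rule tangent_step_unique)
  show "tang \<alpha> \<beta> y (tangent_step \<alpha> \<beta> x) = 1"
    using tang_same_angle[OF assms same_angle_refl] tang_tangent_step by metis
  show "turn \<alpha> \<beta> y (tangent_step \<alpha> \<beta> x) > 0"
    using turn_same_angle[OF assms same_angle_refl] turn_tangent_step_pos by metis
qed

lemma tangent_step_add_2pi: "tangent_step \<alpha> \<beta> (x + 2 * pi) = tangent_step \<alpha> \<beta> x + 2 * pi"
  by (simp add: tangent_step_def lift_angle_def)

lemma strict_mono_tangent_step: "strict_mono (tangent_step \<alpha> \<beta>)"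
proof -
  have "cos t \<noteq> 0 \<or> sin t \<noteq> 0" for t :: real
    by (metis sin_zero_abs_cos_one abs_zero zero_neq_one)
  then have "continuous_on UNIV (\<lambda>t. touch_x (\<alpha> * cos t) (\<beta> * sin t))"
    "continuous_on UNIV (\<lambda>t. touch_y (\<alpha> * cos t) (\<beta> * sin t))"
    unfolding touch_x_def touch_y_def using \<alpha> \<beta> by (auto intro!: continuous_intros)
  moreover have "same_angle x y"
    if "touch_x (\<alpha> * cos x) (\<beta> * sin x) = touch_x (\<alpha> * cos y) (\<beta> * sin y)"
      "touch_y (\<alpha> * cos x) (\<beta> * sin x) = touch_y (\<alpha> * cos y) (\<beta> * sin y)" for x y
  proof (rule same_angle_if_turn_pos[OF \<alpha> \<beta> tang_tangent_step _ turn_tangent_step_pos])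
    have "same_angle (tangent_step \<alpha> \<beta> y) (tangent_step \<alpha> \<beta> x)"
      using that by (simp add: same_angle_def cos_tangent_step sin_tangent_step)
    then show "tang \<alpha> \<beta> y (tangent_step \<alpha> \<beta> x) = 1" "turn \<alpha> \<beta> y (tangent_step \<alpha> \<beta> x) > 0"
      using tang_same_angle[OF same_angle_refl] turn_same_angle[OF same_angle_refl]
        tang_tangent_step turn_tangent_step_pos by metis+
  qed
  ultimately show ?thesis
    using strict_mono_lift_angle[OF _ _ touch_vertex(1) touch_vertex_left] unfolding tangent_step_def
    by blast
qed

end

section \<open>The angle of the tangent vector\<close>

lemma norm_tc_sq: "(norm (tc a b t))\<^sup>2 = (a * sin t)\<^sup>2 + (b * cos t)\<^sup>2"
  by (simp add: tc_def norm_Pair power_mult_distrib)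

lemma norm_tc_same_angle: "same_angle x y \<Longrightarrow> norm (tc a b x) = norm (tc a b y)"
  by (simp add: same_angle_def tc_def)

lemma norm_tc_add_pi: "norm (tc a b (t + pi)) = norm (tc a b t)"
  by (simp add: tc_def norm_Pair)

lemma norm_tc_add_multiple_pi: "norm (tc a b (t + real j * pi)) = norm (tc a b t)"
proof (induction j)
  case (Suc j)
  then show ?case using norm_tc_add_pi[of a b "t + real j * pi"] by (simp add: algebra_simps)
qed simp

lemma sqrt_kh_mult_kh: "sqrt (kh a b x * kh a b y) = norm (tc a b x) * norm (tc a b y)"
  by (simp add: kh_def real_sqrt_mult)

definition tc_angle :: "real \<Rightarrow> real \<Rightarrow> real \<Rightarrow> real" where
  "tc_angle a b t = lift_angle t (- a * sin t / norm (tc a b t)) (b * cos t / norm (tc a b t))"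

context
  fixes a b :: real
  assumes a: "a > 0" and b: "b > 0"
begin

lemma norm_tc_pos: "norm (tc a b t) > 0"
proof -
  have "sin t \<noteq> 0 \<or> cos t \<noteq> 0" by (metis sin_zero_abs_cos_one abs_zero zero_neq_one)
  then show ?thesis using a b by (auto simp: tc_def zero_prod_def)
qed

lemma tc_angle_dir:
  shows "(- a * sin t / norm (tc a b t))\<^sup>2 + (b * cos t / norm (tc a b t))\<^sup>2 = 1"
    and "cos t * (b * cos t / norm (tc a b t)) - sin t * (- a * sin t / norm (tc a b t)) > 0"
proof -
  define n where "n = norm (tc a b t)"
  have n2: "(a * sin t)\<^sup>2 + (b * cos t)\<^sup>2 = n\<^sup>2" and n: "n > 0"
    unfolding n_def by (rule norm_tc_sq[symmetric] norm_tc_pos)+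
  then show "(- a * sin t / norm (tc a b t))\<^sup>2 + (b * cos t / norm (tc a b t))\<^sup>2 = 1"
    unfolding n_def[symmetric] by (simp add: power_divide add_divide_distrib[symmetric] n2)
  have "b * (cos t)\<^sup>2 + a * (sin t)\<^sup>2 > 0"
  proof (cases "sin t = 0")
    case True
    then show ?thesis using sin_cos_squared_add[of t] b by simp
  next
    case False
    then show ?thesis using a b by (simp add: add_nonneg_pos)
  qed
  moreover have "cos t * (b * cos t / n) - sin t * (- a * sin t / n) = (b * (cos t)\<^sup>2 + a * (sin t)\<^sup>2) / n"
    by (simp add: power2_eq_square add_divide_distrib algebra_simps)
  ultimately show "cos t * (b * cos t / norm (tc a b t)) - sin t * (- a * sin t / norm (tc a b t)) > 0"
    using n unfolding n_def by simp
qed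

lemma
  shows cos_tc_angle: "cos (tc_angle a b t) = - a * sin t / norm (tc a b t)"
    and sin_tc_angle: "sin (tc_angle a b t) = b * cos t / norm (tc a b t)"
    and tc_angle_gt: "t < tc_angle a b t"
    and tc_angle_less: "tc_angle a b t < t + pi"
  unfolding tc_angle_def
  using cos_lift_angle sin_lift_angle lift_angle_gt lift_angle_less tc_angle_dir by blast+

lemma tang_tc_angle_eq:
  "tang \<alpha> \<beta> (tc_angle a b t) (tc_angle a b s)
    = (\<alpha> * a\<^sup>2 * (sin t * sin s) + \<beta> * b\<^sup>2 * (cos t * cos s)) / (norm (tc a b t) * norm (tc a b s))"
  unfolding tang_def cos_tc_angle sin_tc_angle by (simp add: power2_eq_square add_divide_distrib algebra_simps)

lemma norm_tc_tc_angle: "norm (tc a b (tc_angle a b t)) = a * b / norm (tc a b t)"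
proof -
  have "(a * (b * c / n))\<^sup>2 + (b * (- a * s / n))\<^sup>2 = (a * b / n)\<^sup>2 * (c\<^sup>2 + s\<^sup>2)" for c s n :: real
    by (simp add: power_divide power_mult_distrib algebra_simps add_divide_distrib)
  from this[of "cos t" "norm (tc a b t)" "sin t"]
  have "(norm (tc a b (tc_angle a b t)))\<^sup>2 = (a * b / norm (tc a b t))\<^sup>2"
    unfolding norm_tc_sq[of a b "tc_angle a b t"] cos_tc_angle sin_tc_angle by simp
  then show ?thesis using a b norm_tc_pos[of t] by (simp add: power2_eq_iff_nonneg)
qed

lemma norm_tc_tc_angle_mult: "norm (tc a b (tc_angle a b t)) * norm (tc a b t) = a * b"
  using norm_tc_pos[of t] by (simp add: norm_tc_tc_angle)

lemma tc_angle_tc_angle: "tc_angle a b (tc_angle a b t) = t + pi"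
proof (rule same_angle_eq)
  show "same_angle (tc_angle a b (tc_angle a b t)) (t + pi)"
    using a b norm_tc_pos[of t]
    by (simp add: same_angle_def cos_tc_angle sin_tc_angle norm_tc_tc_angle field_simps)
  show "\<bar>tc_angle a b (tc_angle a b t) - (t + pi)\<bar> < 2 * pi"
    using tc_angle_gt[of t] tc_angle_less[of t] tc_angle_gt[of "tc_angle a b t"] tc_angle_less[of "tc_angle a b t"]
    by linarith
qed

lemma strict_mono_tc_angle: "strict_mono (tc_angle a b)"
proof -
  have "norm (tc a b t) \<noteq> 0" for t using norm_tc_pos[of t] by simp
  then have "continuous_on UNIV (\<lambda>t. - a * sin t / norm (tc a b t))"
    "continuous_on UNIV (\<lambda>t. b * cos t / norm (tc a b t))"
    unfolding tc_def by (auto intro!: continuous_intros)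
  moreover have "same_angle x y"
    if "- a * sin x / norm (tc a b x) = - a * sin y / norm (tc a b y)"
      "b * cos x / norm (tc a b x) = b * cos y / norm (tc a b y)" for x y
  proof -
    define l where "l = norm (tc a b x) / norm (tc a b y)"
    have l: "l > 0" using norm_tc_pos by (simp add: l_def)
    have sx: "sin x = l * sin y" and cx: "cos x = l * cos y"
      using that a b norm_tc_pos[of x] norm_tc_pos[of y] by (simp_all add: l_def field_simps)
    have "(sin x)\<^sup>2 + (cos x)\<^sup>2 = l\<^sup>2 * ((sin y)\<^sup>2 + (cos y)\<^sup>2)"
      by (simp only: sx cx power_mult_distrib distrib_left)
    then have "l\<^sup>2 = 1" by (simp only: sin_cos_squared_add mult_1_right)
    then have "l = 1" using l by (simp add: power2_eq_1_iff)
    then show ?thesis using sx cx by (simp add: same_angle_def)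
  qed
  ultimately show ?thesis
    using strict_mono_lift_angle[OF _ _ tc_angle_dir] unfolding tc_angle_def by blast
qed

end

context
  fixes a b \<alpha> \<beta> :: real
  assumes a: "a > 0" and b: "b > 0" and \<alpha>: "\<alpha> > 1" and \<beta>: "\<beta> > 1"
    and confocal: "(\<alpha> * a)\<^sup>2 - a\<^sup>2 = (\<beta> * b)\<^sup>2 - b\<^sup>2"
begin

lemma tc_angle_numerator_sq:
  assumes "tang \<alpha> \<beta> t s = 1"
  shows "(\<alpha> * a\<^sup>2 * (sin t * sin s) + \<beta> * b\<^sup>2 * (cos t * cos s))\<^sup>2
    = (norm (tc a b t) * norm (tc a b s))\<^sup>2"
proof -
  define C S where "C = cos t * cos s" and "S = sin t * sin s"
  have CS: "\<alpha> * C + \<beta> * S = 1" using assms by (simp add: tang_def C_def S_def mult.assoc)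
  have r: "(\<alpha> * a)\<^sup>2 - (\<beta> * b)\<^sup>2 = a\<^sup>2 - b\<^sup>2" using confocal by simp
  have "(\<alpha> * a\<^sup>2 * S + \<beta> * b\<^sup>2 * C)\<^sup>2 - a\<^sup>2 * b\<^sup>2 * (\<alpha> * C + \<beta> * S)\<^sup>2
      = (a\<^sup>2 * S\<^sup>2 - b\<^sup>2 * C\<^sup>2) * ((\<alpha> * a)\<^sup>2 - (\<beta> * b)\<^sup>2)"
    by algebra
  then have "(\<alpha> * a\<^sup>2 * S + \<beta> * b\<^sup>2 * C)\<^sup>2 = a\<^sup>2 * b\<^sup>2 + (a\<^sup>2 * S\<^sup>2 - b\<^sup>2 * C\<^sup>2) * (a\<^sup>2 - b\<^sup>2)"
    unfolding CS r by simp
  moreover have "((a * sin t)\<^sup>2 + (b * cos t)\<^sup>2) * ((a * sin s)\<^sup>2 + (b * cos s)\<^sup>2)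
      = a\<^sup>2 * b\<^sup>2 * (((cos t)\<^sup>2 + (sin t)\<^sup>2) * ((cos s)\<^sup>2 + (sin s)\<^sup>2)) + (a\<^sup>2 * S\<^sup>2 - b\<^sup>2 * C\<^sup>2) * (a\<^sup>2 - b\<^sup>2)"
    unfolding C_def S_def by algebra
  then have "(norm (tc a b t) * norm (tc a b s))\<^sup>2 = a\<^sup>2 * b\<^sup>2 + (a\<^sup>2 * S\<^sup>2 - b\<^sup>2 * C\<^sup>2) * (a\<^sup>2 - b\<^sup>2)"
    by (simp only: power_mult_distrib norm_tc_sq sin_cos_squared_add2 mult_1_right)
  ultimately show ?thesis by (simp add: C_def S_def)
qed

text \<open>Using tangency and confocality, \<open>\<beta>\<close> times the numerator is \<open>\<alpha> a\<^sup>2 - (a\<^sup>2 - b\<^sup>2) cos t cos s\<close>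
  and \<open>\<alpha>\<close> times it is \<open>\<beta> b\<^sup>2 + (a\<^sup>2 - b\<^sup>2) sin t sin s\<close>; the first is positive if \<open>b \<le> a\<close>,
  the second otherwise.\<close>
lemma tc_angle_numerator_pos:
  assumes "tang \<alpha> \<beta> t s = 1"
  shows "\<alpha> * a\<^sup>2 * (sin t * sin s) + \<beta> * b\<^sup>2 * (cos t * cos s) > 0"
proof -
  define C S where "C = cos t * cos s" and "S = sin t * sin s"
  define Q where "Q = \<alpha> * a\<^sup>2 * S + \<beta> * b\<^sup>2 * C"
  have CS: "\<alpha> * C + \<beta> * S = 1" using assms by (simp add: tang_def C_def S_def mult.assoc)
  have "C \<le> 1" "S \<le> 1"
    using abs_cos_mult_cos_add_abs_sin_mult_sin_le[of t s] by (auto simp: C_def S_def)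
  have "\<beta> * Q - (\<alpha> * a\<^sup>2 - (a\<^sup>2 - b\<^sup>2) * C)
      = \<alpha> * a\<^sup>2 * (\<alpha> * C + \<beta> * S - 1) - C * ((\<alpha> * a)\<^sup>2 - a\<^sup>2 - ((\<beta> * b)\<^sup>2 - b\<^sup>2))"
    and "\<alpha> * Q - (\<beta> * b\<^sup>2 + (a\<^sup>2 - b\<^sup>2) * S)
      = \<beta> * b\<^sup>2 * (\<alpha> * C + \<beta> * S - 1) + S * ((\<alpha> * a)\<^sup>2 - a\<^sup>2 - ((\<beta> * b)\<^sup>2 - b\<^sup>2))"
    unfolding Q_def by (simp_all add: power2_eq_square algebra_simps)
  then have \<beta>Q: "\<beta> * Q = \<alpha> * a\<^sup>2 - (a\<^sup>2 - b\<^sup>2) * C" and \<alpha>Q: "\<alpha> * Q = \<beta> * b\<^sup>2 + (a\<^sup>2 - b\<^sup>2) * S"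
    using CS confocal by simp_all
  have "Q > 0"
  proof (cases "b \<le> a")
    case True
    then have "(a\<^sup>2 - b\<^sup>2) * C \<le> a\<^sup>2 - b\<^sup>2"
      using \<open>C \<le> 1\<close> b by (simp add: mult_left_le power_mono)
    moreover have "\<alpha> * a\<^sup>2 > a\<^sup>2" "b\<^sup>2 > 0" using \<alpha> a b by simp_all
    ultimately have "\<beta> * Q > 0" using \<beta>Q by linarith
    then show ?thesis using \<beta> by (simp add: zero_less_mult_iff)
  next
    case False
    then have "a\<^sup>2 - b\<^sup>2 \<le> (a\<^sup>2 - b\<^sup>2) * S"
      using mult_left_mono_neg[OF \<open>S \<le> 1\<close>, of "a\<^sup>2 - b\<^sup>2"] a by (simp add: power_mono)
    moreover have "\<beta> * b\<^sup>2 > b\<^sup>2" "a\<^sup>2 > 0" using \<beta> a b by simp_all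
    ultimately have "\<alpha> * Q > 0" using \<alpha>Q by linarith
    then show ?thesis using \<alpha> by (simp add: zero_less_mult_iff)
  qed
  then show ?thesis by (simp add: Q_def C_def S_def)
qed

lemma tang_tc_angle:
  assumes "tang \<alpha> \<beta> t s = 1"
  shows "tang \<alpha> \<beta> (tc_angle a b t) (tc_angle a b s) = 1"
proof -
  have "\<alpha> * a\<^sup>2 * (sin t * sin s) + \<beta> * b\<^sup>2 * (cos t * cos s) = norm (tc a b t) * norm (tc a b s)"
    using tc_angle_numerator_sq[OF assms] tc_angle_numerator_pos[OF assms] norm_tc_pos[OF a b]
    by (simp add: power2_eq_iff_nonneg)
  then show ?thesis using norm_tc_pos[OF a b, of t] norm_tc_pos[OF a b, of s]
    by (simp add: tang_tc_angle_eq[OF a b])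
qed

lemma turn_tc_angle_pos:
  assumes "tang \<alpha> \<beta> t s = 1" "turn \<alpha> \<beta> t s > 0"
  shows "turn \<alpha> \<beta> (tc_angle a b t) (tc_angle a b s) > 0"
proof -
  have "turn \<alpha> \<beta> s t < 0"
    using turn_mult_turn_commute_neg[OF \<alpha> \<beta> assms(1)] assms(2) by (simp add: mult_less_0_iff)
  moreover have "turn \<alpha> \<beta> (tc_angle a b t) (tc_angle a b s)
      = - (a * b * turn \<alpha> \<beta> s t) / (norm (tc a b t) * norm (tc a b s))"
    unfolding turn_def cos_tc_angle[OF a b] sin_tc_angle[OF a b]
    by (simp add: diff_divide_distrib algebra_simps)
  moreover have "a * b * turn \<alpha> \<beta> s t < 0" using calculation(1) a b by (simp add: mult_pos_neg)
  moreover have "norm (tc a b t) * norm (tc a b s) > 0" using norm_tc_pos[OF a b] by simp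
  ultimately show ?thesis by (simp add: divide_neg_pos)
qed

lemma tc_angle_tangent_step: "tc_angle a b (tangent_step \<alpha> \<beta> t) = tangent_step \<alpha> \<beta> (tc_angle a b t)"
proof (rule same_angle_eq)
  show "same_angle (tc_angle a b (tangent_step \<alpha> \<beta> t)) (tangent_step \<alpha> \<beta> (tc_angle a b t))"
    using tangent_step_unique[OF \<alpha> \<beta>] tang_tc_angle turn_tc_angle_pos
      tang_tangent_step[OF \<alpha> \<beta>] turn_tangent_step_pos[OF \<alpha> \<beta>] by blast
  show "\<bar>tc_angle a b (tangent_step \<alpha> \<beta> t) - tangent_step \<alpha> \<beta> (tc_angle a b t)\<bar> < 2 * pi"
    using tc_angle_gt[OF a b, of "tangent_step \<alpha> \<beta> t"] tc_angle_less[OF a b, of "tangent_step \<alpha> \<beta> t"]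
      tangent_step_gt[OF \<alpha> \<beta>, of t] tangent_step_less[OF \<alpha> \<beta>, of t]
      tangent_step_gt[OF \<alpha> \<beta>, of "tc_angle a b t"] tangent_step_less[OF \<alpha> \<beta>, of "tc_angle a b t"]
      tc_angle_gt[OF a b, of t] tc_angle_less[OF a b, of t]
    by linarith
qed

end

section \<open>Billiards in confocal ellipses\<close>

definition semiaxis_ratio :: "real \<Rightarrow> real \<Rightarrow> real" where
  "semiaxis_ratio c k = sqrt (c\<^sup>2 + k) / c"

lemma semiaxis_ratio_gt_1: "c > 0 \<Longrightarrow> k > 0 \<Longrightarrow> semiaxis_ratio c k > 1"
  unfolding semiaxis_ratio_def by (simp add: real_less_rsqrt)

lemma semiaxis_ratio_confocal: "c \<noteq> 0 \<Longrightarrow> k \<ge> 0 \<Longrightarrow> (semiaxis_ratio c k * c)\<^sup>2 - c\<^sup>2 = k"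
  unfolding semiaxis_ratio_def by simp

lemma on_tangent_ptE_iff:
  "on_tangent ac bc s (ptE ac bc ke x) \<longleftrightarrow> tang (semiaxis_ratio ac ke) (semiaxis_ratio bc ke) x s = 1"
  unfolding on_tangent_def ptE_def tang_def semiaxis_ratio_def by simp

lemma ptE_eq_iff:
  assumes "ke > 0"
  shows "ptE ac bc ke x = ptE ac bc ke y \<longleftrightarrow> same_angle x y"
proof -
  have "0 < ac\<^sup>2 + ke" "0 < bc\<^sup>2 + ke" using assms by (simp_all add: add_nonneg_pos)
  then show ?thesis by (auto simp: ptE_def same_angle_def)
qed

lemma ptE_cross:
  "fst (ptE ac bc ke x) * snd (ptE ac bc ke y) - snd (ptE ac bc ke x) * fst (ptE ac bc ke y)
    = sqrt (ac\<^sup>2 + ke) * sqrt (bc\<^sup>2 + ke) * (cos x * sin y - sin x * cos y)"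
  unfolding ptE_def by (simp add: algebra_simps)

context
  fixes ac bc ke :: real and N :: nat and t t' :: "nat \<Rightarrow> real"
  assumes ac: "ac > 0" and bc: "bc > 0" and ke: "ke > 0"
    and billiard: "billiard ac bc ke N t t'"
begin

abbreviation "step \<equiv> tangent_step (semiaxis_ratio ac ke) (semiaxis_ratio bc ke)"

lemma semiaxis_ratios_gt_1: "semiaxis_ratio ac ke > 1" "semiaxis_ratio bc ke > 1"
  using ac bc ke by (simp_all add: semiaxis_ratio_gt_1)

lemma billiard_side_steps: "same_angle (t' i) (step (t i))" "same_angle (t (Suc i)) (step (t' i))"
proof -
  have "tang (semiaxis_ratio ac ke) (semiaxis_ratio bc ke) (t i) (t' i) = 1"
    "tang (semiaxis_ratio ac ke) (semiaxis_ratio bc ke) (t' i) (t (Suc i)) = 1"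
    using billiard by (auto simp: billiard_def on_tangent_ptE_iff tang_commute)
  moreover have "cos (t i) * sin (t (Suc i)) - sin (t i) * cos (t (Suc i)) > 0"
  proof -
    have "sqrt (ac\<^sup>2 + ke) * sqrt (bc\<^sup>2 + ke) * (cos (t i) * sin (t (Suc i)) - sin (t i) * cos (t (Suc i))) > 0"
      using billiard unfolding billiard_def ptE_cross by blast
    moreover have "sqrt (ac\<^sup>2 + ke) * sqrt (bc\<^sup>2 + ke) > 0" using ke by (simp add: add_nonneg_pos)
    ultimately show ?thesis by (simp add: zero_less_mult_iff)
  qed
  ultimately show "same_angle (t' i) (step (t i))" "same_angle (t (Suc i)) (step (t' i))"
    using turn_pos_if_cross_pos[OF semiaxis_ratios_gt_1] tangent_step_unique[OF semiaxis_ratios_gt_1]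
    by simp_all
qed

lemma billiard_orbit:
  "same_angle (t i) ((step ^^ (2 * i)) (t 0)) \<and> same_angle (t' i) ((step ^^ (2 * i + 1)) (t 0))"
proof (induction i)
  case 0
  then show ?case using billiard_side_steps(1)[of 0] by simp
next
  case (Suc i)
  have "same_angle (t (Suc i)) ((step ^^ (2 * Suc i)) (t 0))"
    using billiard_side_steps(2)[of i] Suc tangent_step_same_angle[OF semiaxis_ratios_gt_1]
    by (simp add: same_angle_trans)
  moreover have "same_angle (t' (Suc i)) ((step ^^ (2 * Suc i + 1)) (t 0))"
    using billiard_side_steps(1)[of "Suc i"] calculation tangent_step_same_angle[OF semiaxis_ratios_gt_1]
    by (simp add: same_angle_trans)
  ultimately show ?case ..
qed

lemma billiard_rotation: "\<exists>m::nat. (step ^^ (2 * N)) (t 0) = t 0 + real m * (2 * pi)"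
proof -
  have "same_angle (t N) (t 0)"
    using billiard ptE_eq_iff[OF ke] unfolding billiard_def by (metis add_0)
  then have "same_angle ((step ^^ (2 * N)) (t 0)) (t 0)"
    using billiard_orbit[of N] by (meson same_angle_sym same_angle_trans)
  then obtain n :: int where n: "(step ^^ (2 * N)) (t 0) = t 0 + 2 * pi * n"
    by (auto simp: same_angle_iff)
  have "x \<le> (step ^^ k) x" for k x
    by (induction k) (use tangent_step_gt[OF semiaxis_ratios_gt_1] in \<open>auto intro: order.trans less_imp_le\<close>)
  from this[of "t 0" "2 * N"] have "0 \<le> 2 * pi * n" using n by linarith
  then have "n \<ge> 0" using pi_gt_zero by (auto simp: zero_le_mult_iff)
  then show ?thesis using n by (intro exI[of _ "nat n"]) (simp add: algebra_simps)
qed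

text \<open>This is where the minimality of the period enters.\<close>
lemma billiard_not_half_rotation:
  assumes "N = 2 * L"
  shows "(step ^^ N) (t 0) \<noteq> t 0 + real m * (2 * pi)"
proof
  assume half: "(step ^^ N) (t 0) = t 0 + real m * (2 * pi)"
  have "ptE ac bc ke (t (i + L)) = ptE ac bc ke (t i)" for i
  proof -
    have "2 * (i + L) = 2 * i + N" using assms by simp
    then have "(step ^^ (2 * (i + L))) (t 0) = (step ^^ (2 * i)) ((step ^^ N) (t 0))"
      by (simp only: funpow_add o_apply)
    also have "\<dots> = (step ^^ (2 * i)) (t 0) + real m * (2 * pi)"
      using half funpow_shift_commute[of step, OF tangent_step_add_2pi[OF semiaxis_ratios_gt_1]] by simp
    finally have "same_angle ((step ^^ (2 * (i + L))) (t 0)) ((step ^^ (2 * i)) (t 0))"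
      by (auto simp: same_angle_iff algebra_simps intro: exI[of _ "int m"])
    then show ?thesis
      using billiard_orbit ptE_eq_iff[OF ke]
      by (meson same_angle_sym same_angle_trans)
  qed
  moreover have "0 < L" "L < N" using billiard assms by (auto simp: billiard_def)
  ultimately show False using billiard unfolding billiard_def by blast
qed

lemma billiard_half_turn:
  assumes "N = 2 * L"
  shows "\<exists>j::nat. \<forall>k. (step ^^ (k + L)) (t 0) = tc_angle ac bc ((step ^^ k) (t 0)) + real j * pi"
proof -
  obtain m where m: "(step ^^ (2 * N)) (t 0) = t 0 + real m * (2 * pi)" using billiard_rotation by blast
  have "(semiaxis_ratio ac ke * ac)\<^sup>2 - ac\<^sup>2 = (semiaxis_ratio bc ke * bc)\<^sup>2 - bc\<^sup>2"
    using ac bc ke by (simp add: semiaxis_ratio_confocal)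
  note commute = tc_angle_tangent_step[OF ac bc semiaxis_ratios_gt_1 this]
  show ?thesis
  proof (rule funpow_eq_quarter_turn)
    show "strict_mono step" by (rule strict_mono_tangent_step[OF semiaxis_ratios_gt_1])
    show "strict_mono (tc_angle ac bc)" by (rule strict_mono_tc_angle[OF ac bc])
    show "step (x + 2 * pi) = step x + 2 * pi" for x by (rule tangent_step_add_2pi[OF semiaxis_ratios_gt_1])
    show "tc_angle ac bc (step x) = step (tc_angle ac bc x)" for x by (rule commute)
    show "tc_angle ac bc (tc_angle ac bc x) = x + pi" for x by (rule tc_angle_tc_angle[OF ac bc])
    show "(step ^^ (4 * L)) (t 0) = t 0 + real m * (2 * pi)" using m assms by simp
    show "(step ^^ (2 * L)) (t 0) \<noteq> t 0 + real m' * (2 * pi)" for m'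
      using billiard_not_half_rotation assms by simp
  qed
qed

lemma billiard_norm_tc_half_period:
  assumes "N = 2 * L" "same_angle x ((step ^^ k) (t 0))" "same_angle y ((step ^^ (k + L)) (t 0))"
  shows "norm (tc ac bc x) * norm (tc ac bc y) = ac * bc"
proof -
  obtain j where "(step ^^ (k + L)) (t 0) = tc_angle ac bc ((step ^^ k) (t 0)) + real j * pi"
    using billiard_half_turn[OF assms(1)] by blast
  then have "norm (tc ac bc y) = norm (tc ac bc (tc_angle ac bc ((step ^^ k) (t 0))))"
    using norm_tc_same_angle[OF assms(3)] norm_tc_add_multiple_pi by metis
  moreover have "norm (tc ac bc x) = norm (tc ac bc ((step ^^ k) (t 0)))"
    by (rule norm_tc_same_angle[OF assms(2)])
  ultimately show ?thesis using norm_tc_tc_angle_mult[OF ac bc] by (simp add: mult.commute)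
qed

end

theorem lemma2:
  fixes ac bc ke :: real and N n :: nat and t t' :: "nat \<Rightarrow> real"
  assumes "ac > bc" and "bc > 0" and "ke > 0"
    and "billiard ac bc ke N t t'"
    and "even N"
  shows "(N = 4 * n \<longrightarrow> (\<forall>i.
            norm (tc ac bc (t i)) * norm (tc ac bc (t (i + n)))
              = sqrt (kh ac bc (t i) * kh ac bc (t (i + n)))
          \<and> sqrt (kh ac bc (t i) * kh ac bc (t (i + n))) = ac * bc
          \<and> norm (tc ac bc (t' i)) * norm (tc ac bc (t' (i + n)))
              = sqrt (kh ac bc (t' i) * kh ac bc (t' (i + n)))
          \<and> sqrt (kh ac bc (t' i) * kh ac bc (t' (i + n))) = ac * bc))
       \<and> (N = 4 * n + 2 \<longrightarrow> (\<forall>i.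
            norm (tc ac bc (t i)) * norm (tc ac bc (t' (i + n)))
              = sqrt (kh ac bc (t i) * kh ac bc (t' (i + n)))
          \<and> sqrt (kh ac bc (t i) * kh ac bc (t' (i + n))) = ac * bc
          \<and> norm (tc ac bc (t' i)) * norm (tc ac bc (t (i + n + 1)))
              = sqrt (kh ac bc (t' i) * kh ac bc (t (i + n + 1)))
          \<and> sqrt (kh ac bc (t' i) * kh ac bc (t (i + n + 1))) = ac * bc))"
proof -
  have ac: "ac > 0" using assms(1,2) by linarith
  obtain L where L: "N = 2 * L" using assms(5) by blast
  define W where "W k = (tangent_step (semiaxis_ratio ac ke) (semiaxis_ratio bc ke) ^^ k) (t 0)" for k
  have orbit: "same_angle (t i) (W (2 * i))" "same_angle (t' i) (W (2 * i + 1))" for i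
    using billiard_orbit[OF ac assms(2-4)] by (simp_all add: W_def)
  have pair: "norm (tc ac bc x) * norm (tc ac bc y) = sqrt (kh ac bc x * kh ac bc y)
      \<and> sqrt (kh ac bc x * kh ac bc y) = ac * bc"
    if "same_angle x (W k)" "same_angle y (W (k + L))" for x y k
    using billiard_norm_tc_half_period[OF ac assms(2-4) L that[unfolded W_def]]
    by (simp add: sqrt_kh_mult_kh)
  have "same_angle (t (i + n)) (W (2 * i + L)) \<and> same_angle (t' (i + n)) (W (2 * i + 1 + L))"
    if "N = 4 * n" for i
  proof -
    have "L = 2 * n" using that L by simp
    then show ?thesis using orbit[of "i + n"] by (simp add: algebra_simps)
  qed
  moreover have "same_angle (t' (i + n)) (W (2 * i + L)) \<and> same_angle (t (i + n + 1)) (W (2 * i + 1 + L))"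
    if "N = 4 * n + 2" for i
  proof -
    have "L = 2 * n + 1" using that L by simp
    then show ?thesis using orbit[of "i + n"] orbit[of "i + n + 1"] by (simp add: algebra_simps)
  qed
  ultimately show ?thesis using pair orbit by meson
qed

end
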